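(* Let $\mathbb{K}=(G,M,I)$ be a formal context and let $\operatorname{Ext}(\mathbb{K})$ be its set of extents. Consider the lattice ${\downarrow}\operatorname{Ext}(\mathbb{K})$ of all closure systems $\mathcal{R}$ on $G$ with $\mathcal{R}\subseteq \operatorname{Ext}(\mathbb{K})$, ordered by set inclusion. For $\mathcal{R}\in{\downarrow}\operatorname{Ext}(\mathbb{K})$ the following are equivalent: (1) $\mathcal{R}$ is join-irreducible in ${\downarrow}\operatorname{Ext}(\mathbb{K})$; (2) there exists $A\in\operatorname{Ext}(\mathbb{K})\setminus\{G\}$ with $\mathcal{R}=\{G,A\}$.
   Context: A formal context is a triple $(G,M,I)$ with finite nonempty sets $G$ (objects), $M$ (attributes) and $I\subseteq G\times M$. Derivations: for $A\subseteq G$, $A'=\{m\in M\mid \forall a\in A:(a,m)\in I\}$; for $B\subseteq M$, $B'=\{g\in G\mid \forall b\in B:(g,b)\in I\}$. An extent is a set $A\subseteq G$ with $A''=A$; $\operatorname{Ext}(\mathbb{K})$ is the set of all extents (it contains $G$ and is closed under intersections). A closure system on $G$ is a family of subsets of $G$ containing $G$ and closed under arbitrary intersections. In ${\downarrow}\operatorname{Ext}(\mathbb{K})$ the meet is intersection and the join of a family is the smallest closure system on $G$ containing its union; the least element is $\{G\}$. An element $x$ of a lattice is join-irreducible if $x\neq\bot$ and $x=\bigvee Y$ implies $x\in Y$. *)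

theory Defs
  imports Main
begin

definition formal_context :: "'g set \<Rightarrow> 'm set \<Rightarrow> ('g \<times> 'm) set \<Rightarrow> bool" where
  "formal_context G M I \<longleftrightarrow> finite G \<and> G \<noteq> {} \<and> finite M \<and> M \<noteq> {} \<and> I \<subseteq> G \<times> M"

definition obj_deriv :: "'g set \<Rightarrow> 'm set \<Rightarrow> ('g \<times> 'm) set \<Rightarrow> 'g set \<Rightarrow> 'm set" where
  "obj_deriv G M I A = {m \<in> M. \<forall>a\<in>A. (a, m) \<in> I}"

definition attr_deriv :: "'g set \<Rightarrow> 'm set \<Rightarrow> ('g \<times> 'm) set \<Rightarrow> 'm set \<Rightarrow> 'g set" where
  "attr_deriv G M I B = {g \<in> G. \<forall>b\<in>B. (g, b) \<in> I}"

definition extents :: "'g set \<Rightarrow> 'm set \<Rightarrow> ('g \<times> 'm) set \<Rightarrow> 'g set set" where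
  "extents G M I = {A. A \<subseteq> G \<and> attr_deriv G M I (obj_deriv G M I A) = A}"

text \<open>A closure system on G: a family of subsets of G containing G and closed under
  arbitrary intersections (of nonempty subfamilies; the empty intersection is G).\<close>
definition closure_system :: "'g set \<Rightarrow> 'g set set \<Rightarrow> bool" where
  "closure_system G R \<longleftrightarrow> R \<subseteq> Pow G \<and> G \<in> R \<and> (\<forall>S\<subseteq>R. S \<noteq> {} \<longrightarrow> \<Inter>S \<in> R)"

definition down_ext :: "'g set \<Rightarrow> 'm set \<Rightarrow> ('g \<times> 'm) set \<Rightarrow> 'g set set set" where
  "down_ext G M I = {R. closure_system G R \<and> R \<subseteq> extents G M I}"

definition cs_join :: "'g set \<Rightarrow> 'g set set set \<Rightarrow> 'g set set" where
  "cs_join G Y = \<Inter>{R. closure_system G R \<and> \<Union>Y \<subseteq> R}"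

definition join_irreducible_down_ext :: "'g set \<Rightarrow> 'm set \<Rightarrow> ('g \<times> 'm) set \<Rightarrow> 'g set set \<Rightarrow> bool" where
  "join_irreducible_down_ext G M I R \<longleftrightarrow>
     R \<noteq> {G} \<and> (\<forall>Y\<subseteq>down_ext G M I. R = cs_join G Y \<longrightarrow> R \<in> Y)"

end

theory Submission
  imports Defs
begin

text \<open>Every closure system \<open>R \<noteq> {G}\<close> is the join of the two-element closure systems
  \<open>{G, A}\<close> with \<open>A \<in> R\<close>, and these lie below \<open>R\<close> in \<open>\<down>Ext(K)\<close>; so a join-irreducible \<open>R\<close>
  must be one of them. Conversely, if \<open>{G, A} = \<Or>Y\<close> with \<open>A \<noteq> G\<close>, then \<open>A\<close> lies in some
  member of \<open>Y\<close> (otherwise the join would be \<open>{G}\<close>), and that member, containing \<open>G\<close> and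
  contained in \<open>{G, A}\<close>, is \<open>{G, A}\<close> itself.\<close>

lemma cs_join_upper: "\<Union>Y \<subseteq> cs_join G Y"
  unfolding cs_join_def by blast

lemma cs_join_least: "closure_system G R \<Longrightarrow> \<Union>Y \<subseteq> R \<Longrightarrow> cs_join G Y \<subseteq> R"
  unfolding cs_join_def by blast

lemma cs_join_eq:
  assumes "closure_system G R" and "\<Union>Y = R"
  shows "cs_join G Y = R"
proof (rule subset_antisym)
  show "cs_join G Y \<subseteq> R"
    using assms by (simp add: cs_join_least)
  show "R \<subseteq> cs_join G Y"
    using assms(2) cs_join_upper by blast
qed

lemma closure_system_top: "closure_system G R \<Longrightarrow> G \<in> R"
  unfolding closure_system_def by blast

lemma closure_system_singleton: "closure_system G {G}"
  unfolding closure_system_def by auto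

lemma closure_system_pair:
  assumes "A \<subseteq> G"
  shows "closure_system G {G, A}"
  unfolding closure_system_def
proof (intro conjI allI impI)
  show "{G, A} \<subseteq> Pow G" "G \<in> {G, A}"
    using assms by auto
  fix S assume "S \<subseteq> {G, A}" "S \<noteq> {}"
  then have "S = {G} \<or> S = {A} \<or> S = {G, A}" by blast
  then show "\<Inter>S \<in> {G, A}"
    using assms by auto
qed

lemma cs_join_pairs_eq:
  assumes "closure_system G R" and "R \<noteq> {G}"
  shows "cs_join G ((\<lambda>A. {G, A}) ` (R - {G})) = R"
proof (rule cs_join_eq[OF assms(1)])
  show "\<Union>((\<lambda>A. {G, A}) ` (R - {G})) = R"
    using closure_system_top[OF assms(1)] assms(2) by auto
qed

lemma pair_mem_cs_join_eq:
  assumes closed: "\<And>Z. Z \<in> Y \<Longrightarrow> closure_system G Z"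
    and join: "cs_join G Y = {G, A}" and "A \<noteq> G"
  shows "{G, A} \<in> Y"
proof -
  have upper: "\<Union>Y \<subseteq> {G, A}"
    using cs_join_upper[of Y G] join by simp
  have "A \<in> \<Union>Y"
  proof (rule ccontr)
    assume "A \<notin> \<Union>Y"
    with upper have "\<Union>Y \<subseteq> {G}" by blast
    then have "cs_join G Y \<subseteq> {G}"
      by (rule cs_join_least[OF closure_system_singleton])
    with join \<open>A \<noteq> G\<close> show False by simp
  qed
  then obtain Z where "Z \<in> Y" and "A \<in> Z" by blast
  moreover have "G \<in> Z"
    using closed[OF \<open>Z \<in> Y\<close>] by (rule closure_system_top)
  moreover have "Z \<subseteq> {G, A}"
    using \<open>Z \<in> Y\<close> upper by blast
  ultimately have "Z = {G, A}" by blast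
  with \<open>Z \<in> Y\<close> show ?thesis by simp
qed

lemma pair_in_down_ext:
  assumes "R \<in> down_ext G M I" and "A \<in> R"
  shows "{G, A} \<in> down_ext G M I"
proof -
  have R: "closure_system G R" "R \<subseteq> extents G M I"
    using assms(1) unfolding down_ext_def by auto
  then have "A \<subseteq> G" "{G, A} \<subseteq> R"
    using \<open>A \<in> R\<close> by (auto simp: closure_system_def dest: closure_system_top)
  with R show ?thesis
    unfolding down_ext_def by (auto intro: closure_system_pair)
qed

theorem proposition3:
  fixes G :: "'g set" and M :: "'m set" and I :: "('g \<times> 'm) set" and R :: "'g set set"
  assumes "formal_context G M I"
    and "R \<in> down_ext G M I"
  shows "join_irreducible_down_ext G M I R \<longleftrightarrow>
           (\<exists>A \<in> extents G M I - {G}. R = {G, A})"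
proof
  have R: "closure_system G R" "R \<subseteq> extents G M I"
    using assms(2) unfolding down_ext_def by auto
  assume irred: "join_irreducible_down_ext G M I R"
  let ?Y = "(\<lambda>A. {G, A}) ` (R - {G})"
  have "?Y \<subseteq> down_ext G M I"
    using pair_in_down_ext[OF assms(2)] by auto
  moreover have "R \<noteq> {G}"
    using irred unfolding join_irreducible_down_ext_def by simp
  then have "R = cs_join G ?Y"
    using cs_join_pairs_eq[OF R(1)] by simp
  ultimately have "R \<in> ?Y"
    using irred unfolding join_irreducible_down_ext_def by blast
  with R show "\<exists>A \<in> extents G M I - {G}. R = {G, A}" by blast
next
  assume "\<exists>A \<in> extents G M I - {G}. R = {G, A}"
  then obtain A where "A \<noteq> G" and R: "R = {G, A}" by blast
  have "R \<in> Y" if "Y \<subseteq> down_ext G M I" and "R = cs_join G Y" for Y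
    using that R \<open>A \<noteq> G\<close> pair_mem_cs_join_eq[of Y G A]
    unfolding down_ext_def by auto
  with R \<open>A \<noteq> G\<close> show "join_irreducible_down_ext G M I R"
    unfolding join_irreducible_down_ext_def by auto
qed

end
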